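(* Let $A\in\mathrm{GL}_{n}(\mathbb{Z})$ be irreducible and have an eigenvalue of absolute value $1$. Then the stable word length on $G=\mathbb{Z}^{n}\rtimes_{A}\mathbb{Z}$ (with respect to a finite generating set) is purely positive, i.e. it is positive on every element of infinite order.
   Context: $\mathbb{Z}^{n}\rtimes_{A}\mathbb{Z}$ is the semidirect product in which a generator of $\mathbb{Z}$ acts on $\mathbb{Z}^n$ by $A$. $A$ is irreducible if $\mathbb{Z}^n$ has no nonzero proper $A$-invariant subgroup $I$ with $\mathbb{Z}^n/I$ torsion-free (equivalently, $\mathbb{Q}^n$ has no nonzero proper $A$-invariant subspace). For a finite symmetric generating set $S$ with word length $|\cdot|_S$, the stable word length is $\mathrm{swl}_S(g)=\lim_{k\to\infty}|g^{k}|_S/k$. *)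

theory Defs
  imports "HOL-Analysis.Analysis"
begin

type_synonym 'n sdp = "(int^'n) \<times> int"

definition in_GL_int :: "int^'n^'n \<Rightarrow> bool" where
  "in_GL_int A \<longleftrightarrow> (\<exists>B. A ** B = mat 1 \<and> B ** A = mat 1)"

definition gl_inv :: "int^'n^'n \<Rightarrow> int^'n^'n" where
  "gl_inv A = (SOME B. A ** B = mat 1 \<and> B ** A = mat 1)"

definition nat_mpow :: "int^'n^'n \<Rightarrow> nat \<Rightarrow> int^'n^'n" where
  "nat_mpow A k = (((**) A) ^^ k) (mat 1)"

definition int_mpow :: "int^'n^'n \<Rightarrow> int \<Rightarrow> int^'n^'n" where
  "int_mpow A k = (if 0 \<le> k then nat_mpow A (nat k) else nat_mpow (gl_inv A) (nat (-k)))"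

definition irreducible_int_mat :: "int^'n^'n \<Rightarrow> bool" where
  "irreducible_int_mat A \<longleftrightarrow>
     \<not> (\<exists>I :: (int^'n) set.
          0 \<in> I \<and> (\<forall>x\<in>I. \<forall>y\<in>I. x + y \<in> I) \<and> (\<forall>x\<in>I. - x \<in> I)
        \<and> I \<noteq> {0} \<and> I \<noteq> UNIV
        \<and> (\<forall>x\<in>I. A *v x \<in> I)
        \<and> (\<forall>v (m::int). m \<noteq> 0 \<and> m *s v \<in> I \<longrightarrow> v \<in> I))"

definition has_unit_eigenvalue :: "int^'n^'n \<Rightarrow> bool" where
  "has_unit_eigenvalue A \<longleftrightarrow>
     (\<exists>(c::complex) (v::complex^'n). cmod c = 1 \<and> v \<noteq> 0 \<and>
        (\<chi> i j. (of_int (A $ i $ j) :: complex)) *v v = c *s v)"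

definition sd_mult :: "int^'n^'n \<Rightarrow> ('n sdp) \<Rightarrow> ('n sdp) \<Rightarrow> ('n sdp)" where
  "sd_mult A g h = (fst g + int_mpow A (snd g) *v fst h, snd g + snd h)"

definition sd_one :: "('n::finite) sdp" where
  "sd_one = (0, 0)"

definition sd_inv :: "int^'n^'n \<Rightarrow> ('n sdp) \<Rightarrow> ('n sdp)" where
  "sd_inv A g = (- (int_mpow A (- snd g) *v fst g), - snd g)"

definition sd_pow :: "int^'n^'n \<Rightarrow> ('n sdp) \<Rightarrow> nat \<Rightarrow> ('n sdp)" where
  "sd_pow A g k = ((sd_mult A g) ^^ k) sd_one"

definition sd_prod :: "int^'n^'n \<Rightarrow> ('n sdp) list \<Rightarrow> ('n sdp)" where
  "sd_prod A ws = foldr (sd_mult A) ws sd_one"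

definition finite_sym_gen_set :: "int^'n^'n \<Rightarrow> ('n sdp) set \<Rightarrow> bool" where
  "finite_sym_gen_set A S \<longleftrightarrow> finite S \<and> (\<forall>s\<in>S. sd_inv A s \<in> S)
      \<and> (\<forall>g. \<exists>ws. set ws \<subseteq> S \<and> sd_prod A ws = g)"

definition word_length :: "int^'n^'n \<Rightarrow> ('n sdp) set \<Rightarrow> ('n sdp) \<Rightarrow> nat" where
  "word_length A S g = (LEAST m. \<exists>ws. set ws \<subseteq> S \<and> length ws = m \<and> sd_prod A ws = g)"

definition stable_word_length :: "int^'n^'n \<Rightarrow> ('n sdp) set \<Rightarrow> ('n sdp) \<Rightarrow> real" where
  "stable_word_length A S g = lim (\<lambda>k. real (word_length A S (sd_pow A g k)) / real k)"

definition infinite_order :: "int^'n^'n \<Rightarrow> ('n sdp) \<Rightarrow> bool" where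
  "infinite_order A g \<longleftrightarrow> (\<forall>k>0. sd_pow A g k \<noteq> sd_one)"

end

theory Submission
  imports Defs
begin

(*
  A left eigenvector w of A for an eigenvalue c with |c| = 1 gives the seminorm
  u \<mapsto> |w \<cdot> u| on Z^n, which is invariant under A. Its kernel is an A-invariant
  subgroup with torsion-free quotient, so by irreducibility it is a norm. Hence
  (v, k) \<mapsto> |w \<cdot> v| + |k| is subadditive on the semidirect product and bounded by a constant
  times word length. Along the powers of an element g \<noteq> 1 it grows linearly:
  either the Z-component of g is nonzero, or g^m = (m v, 0) with v \<noteq> 0. By
  Fekete's lemma the stable word length is the infimum of |g^m|/m, hence positive.
*)

lemma subadditive_le_mult_add:
  fixes a :: "nat \<Rightarrow> real"
  assumes "\<And>m n. a (m + n) \<le> a m + a n"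
  shows "a (q * m + r) \<le> real q * a m + a r"
proof (induction q)
  case 0
  then show ?case by simp
next
  case (Suc q)
  have "a (Suc q * m + r) \<le> a m + a (q * m + r)"
    using assms[of m "q * m + r"] by (simp add: add.assoc)
  with Suc show ?case by (simp add: algebra_simps)
qed

lemma subadditive_quotient_le:
  fixes a :: "nat \<Rightarrow> real"
  assumes "\<And>m n. a (m + n) \<le> a m + a n" and "\<And>n. a n \<ge> 0" and "m \<ge> 1" and "n \<ge> 1"
  shows "a n / n \<le> a m / m + (\<Sum>r<m. a r) / n"
proof -
  have "a n \<le> real (n div m) * a m + a (n mod m)"
    using subadditive_le_mult_add[OF assms(1), of "n div m" m "n mod m"] by simp
  also have "real (n div m) * a m \<le> n * (a m / m)"
  proof -
    have "real (n div m) * m \<le> n"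
      by (simp add: div_times_less_eq_dividend flip: of_nat_mult)
    then have "real (n div m) * m * (a m / m) \<le> n * (a m / m)"
      using assms(2)[of m] by (intro mult_right_mono) auto
    then show ?thesis
      using assms(3) by simp
  qed
  also have "a (n mod m) \<le> (\<Sum>r<m. a r)"
    using assms(2,3) by (intro member_le_sum) auto
  finally show ?thesis
    using assms(4) by (simp add: field_simps)
qed

lemma subadditive_quotient_tendsto_Inf:
  fixes a :: "nat \<Rightarrow> real"
  assumes sub: "\<And>m n. a (m + n) \<le> a m + a n" and nonneg: "\<And>n. a n \<ge> 0"
  shows "(\<lambda>n. a n / n) \<longlonglongrightarrow> (INF n\<in>{1..}. a n / n)"
proof (rule order_tendstoI)
  let ?L = "INF n\<in>{1..}. a n / n"
  have bdd: "bdd_below ((\<lambda>n. a n / n) ` {1..})"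
    by (rule bdd_belowI[of _ 0]) (auto simp: nonneg)
  fix y
  assume "y < ?L"
  have "?L \<le> a n / n" if "n \<ge> 1" for n
    using bdd that by (auto intro: cINF_lower)
  then show "\<forall>\<^sub>F n in sequentially. y < a n / n"
    unfolding eventually_sequentially using \<open>y < ?L\<close> by (meson less_le_trans)
next
  let ?L = "INF n\<in>{1..}. a n / n"
  fix y
  assume "?L < y"
  then obtain m where m: "m \<ge> 1" "a m / m < y"
    using cInf_lessD[of "(\<lambda>n. a n / n) ` {1..}" y] by auto
  have "(\<lambda>n. (\<Sum>r<m. a r) / real n) \<longlonglongrightarrow> 0"
    by (rule lim_const_over_n)
  then have "\<forall>\<^sub>F n in sequentially. (\<Sum>r<m. a r) / n < y - a m / m"
    by (rule order_tendstoD(2)) (use m(2) in simp)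
  then show "\<forall>\<^sub>F n in sequentially. a n / n < y"
    using eventually_ge_at_top[of 1]
    by eventually_elim (use subadditive_quotient_le[OF sub nonneg m(1)] in fastforce)
qed

lemma left_eigenvector_exists:
  fixes M :: "'a::field^'n^'n"
  assumes "M *v v = c *s v" and "v \<noteq> 0"
  obtains w where "w \<noteq> 0" and "w v* M = c *s w"
proof -
  have mat_scalar: "mat c *v x = c *s x" "x v* mat c = c *s x" for x :: "'a^'n"
    by (simp_all add: vec_eq_iff matrix_vector_mult_def vector_matrix_mult_def mat_def
        if_distrib if_distribR mult.commute sum.delta cong: if_cong)
  have "(M - mat c) *v v = 0"
    using assms(1) by (simp add: matrix_vector_mult_diff_rdistrib mat_scalar)
  then have "\<not> (\<exists>B. B ** (M - mat c) = mat 1)"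
    using assms(2) matrix_left_invertible_ker by blast
  then have "\<not> (\<exists>B. B ** transpose (M - mat c) = mat 1)"
    using left_invertible_transpose matrix_left_right_inverse by blast
  then obtain w where "w \<noteq> 0" "transpose (M - mat c) *v w = 0"
    using matrix_left_invertible_ker by blast
  then show ?thesis
    using that by (simp add: vector_matrix_mult_diff_rdistrib mat_scalar)
qed

lemma gl_inv_inverse:
  assumes "in_GL_int A"
  shows "A ** gl_inv A = mat 1" and "gl_inv A ** A = mat 1"
proof -
  have "A ** gl_inv A = mat 1 \<and> gl_inv A ** A = mat 1"
    using assms unfolding in_GL_int_def gl_inv_def by (rule someI_ex)
  then show "A ** gl_inv A = mat 1" "gl_inv A ** A = mat 1" by auto
qed

lemma nat_mpow_0 [simp]: "nat_mpow A 0 = mat 1"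
  by (simp add: nat_mpow_def)

lemma nat_mpow_Suc: "nat_mpow A (Suc k) = A ** nat_mpow A k"
  by (simp add: nat_mpow_def)

lemma int_mpow_0 [simp]: "int_mpow A 0 = mat 1"
  by (simp add: int_mpow_def)

lemma int_mpow_plus_1:
  assumes "in_GL_int A"
  shows "int_mpow A (k + 1) = A ** int_mpow A k"
proof (cases "k \<ge> 0")
  case True
  then have "nat (k + 1) = Suc (nat k)" by simp
  with True show ?thesis by (simp add: int_mpow_def nat_mpow_Suc)
next
  case False
  define m where "m = nat (- k - 1)"
  have m: "nat (- k) = Suc m" "nat (- (k + 1)) = m"
    using False by (simp_all add: m_def)
  have "int_mpow A k = gl_inv A ** nat_mpow (gl_inv A) m"
    using False m by (simp add: int_mpow_def nat_mpow_Suc)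
  moreover have "int_mpow A (k + 1) = nat_mpow (gl_inv A) m"
    using False m by (cases "k = -1") (auto simp: int_mpow_def)
  ultimately show ?thesis
    by (simp add: matrix_mul_assoc gl_inv_inverse[OF assms])
qed

lemma int_mpow_add:
  assumes "in_GL_int A"
  shows "int_mpow A (k + l) = int_mpow A k ** int_mpow A l"
proof (induction k rule: int_induct[where k = 0])
  case base
  then show ?case by simp
next
  case (step1 i)
  have "int_mpow A (i + 1 + l) = A ** int_mpow A (i + l)"
    using int_mpow_plus_1[OF assms, of "i + l"] by (simp add: ac_simps)
  with step1 show ?case
    by (simp add: int_mpow_plus_1[OF assms] matrix_mul_assoc)
next
  case (step2 i)
  have "int_mpow A (i + l) = A ** int_mpow A (i - 1 + l)"
    using int_mpow_plus_1[OF assms, of "i - 1 + l"] by (simp add: ac_simps)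
  moreover have "int_mpow A i = A ** int_mpow A (i - 1)"
    using int_mpow_plus_1[OF assms, of "i - 1"] by simp
  ultimately have "A ** int_mpow A (i - 1 + l) = A ** (int_mpow A (i - 1) ** int_mpow A l)"
    using step2 by (simp add: matrix_mul_assoc)
  then show ?case
    by (metis gl_inv_inverse(2)[OF assms] matrix_mul_assoc matrix_mul_lid)
qed

lemma nat_mpow_invariant:
  assumes "\<And>u. f (X *v u) = f u"
  shows "f (nat_mpow X k *v u) = f u"
  by (induction k) (simp_all add: nat_mpow_Suc assms flip: matrix_vector_mul_assoc)

lemma int_mpow_invariant:
  assumes "in_GL_int A" and "\<And>u. f (A *v u) = f u"
  shows "f (int_mpow A k *v u) = f u"
proof -
  have "f (gl_inv A *v u) = f u" for u
    using assms(2)[of "gl_inv A *v u"]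
    by (simp add: matrix_vector_mul_assoc gl_inv_inverse[OF assms(1)])
  then show ?thesis
    unfolding int_mpow_def using nat_mpow_invariant[of f] assms(2) by simp
qed

lemma sd_mult_assoc:
  assumes "in_GL_int A"
  shows "sd_mult A (sd_mult A g h) k = sd_mult A g (sd_mult A h k)"
  by (simp add: sd_mult_def int_mpow_add[OF assms] matrix_vector_right_distrib
      matrix_vector_mul_assoc add.assoc)

lemma sd_one_mult [simp]: "sd_mult A sd_one g = g"
  by (simp add: sd_mult_def sd_one_def)

lemma sd_mult_one [simp]: "sd_mult A g sd_one = g"
  by (simp add: sd_mult_def sd_one_def)

lemma sd_prod_append:
  assumes "in_GL_int A"
  shows "sd_prod A (xs @ ys) = sd_mult A (sd_prod A xs) (sd_prod A ys)"
  by (induction xs) (simp_all add: sd_prod_def sd_mult_assoc[OF assms])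

lemma sd_pow_add:
  assumes "in_GL_int A"
  shows "sd_pow A g (k + l) = sd_mult A (sd_pow A g k) (sd_pow A g l)"
  by (induction k) (simp_all add: sd_pow_def sd_mult_assoc[OF assms])

lemma sd_pow_1 [simp]: "sd_pow A g 1 = g"
  by (simp add: sd_pow_def)

lemma snd_sd_pow: "snd (sd_pow A g k) = int k * snd g"
  by (induction k) (simp_all add: sd_pow_def sd_one_def sd_mult_def algebra_simps)

lemma fst_sd_pow_of_snd_0: "snd g = 0 \<Longrightarrow> fst (sd_pow A g k) = int k *s fst g"
  by (induction k) (simp_all add: sd_pow_def sd_one_def sd_mult_def algebra_simps vec_eq_iff)

lemma word_length_attained:
  assumes "finite_sym_gen_set A S"
  obtains ws where "set ws \<subseteq> S" "length ws = word_length A S g" "sd_prod A ws = g"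
proof -
  obtain ws where "set ws \<subseteq> S" "sd_prod A ws = g"
    using assms unfolding finite_sym_gen_set_def by blast
  then have "\<exists>m ws. set ws \<subseteq> S \<and> length ws = m \<and> sd_prod A ws = g" by blast
  then have "\<exists>ws. set ws \<subseteq> S \<and> length ws = word_length A S g \<and> sd_prod A ws = g"
    unfolding word_length_def by (rule LeastI_ex)
  with that show ?thesis by blast
qed

lemma word_length_le:
  assumes "set ws \<subseteq> S" and "sd_prod A ws = g"
  shows "word_length A S g \<le> length ws"
  unfolding word_length_def by (rule Least_le) (use assms in blast)

lemma word_length_mult_le:
  assumes "in_GL_int A" and "finite_sym_gen_set A S"
  shows "word_length A S (sd_mult A g h) \<le> word_length A S g + word_length A S h"
proof -
  obtain xs where "set xs \<subseteq> S" "length xs = word_length A S g" "sd_prod A xs = g"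
    using word_length_attained[OF assms(2)] .
  moreover obtain ys where "set ys \<subseteq> S" "length ys = word_length A S h" "sd_prod A ys = h"
    using word_length_attained[OF assms(2)] .
  ultimately show ?thesis
    using word_length_le[of "xs @ ys" S A] by (simp add: sd_prod_append[OF assms(1)])
qed

lemma sd_prod_le_sum_mult_length:
  fixes L :: "'n::finite sdp \<Rightarrow> real"
  assumes "\<And>g h. L (sd_mult A g h) \<le> L g + L h" and "L sd_one = 0" and "\<And>g. L g \<ge> 0"
    and "finite S" and "set ws \<subseteq> S"
  shows "L (sd_prod A ws) \<le> (\<Sum>s\<in>S. L s) * length ws"
  using assms(5)
proof (induction ws)
  case Nil
  then show ?case by (simp add: sd_prod_def assms(2))
next
  case (Cons s ws)
  have "L (sd_prod A (s # ws)) \<le> L s + L (sd_prod A ws)"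
    unfolding sd_prod_def using assms(1) by simp
  also have "L s \<le> (\<Sum>s\<in>S. L s)"
    using Cons.prems assms(3,4) by (intro member_le_sum) auto
  also have "L (sd_prod A ws) \<le> (\<Sum>s\<in>S. L s) * length ws"
    using Cons by simp
  finally show ?case by (simp add: algebra_simps)
qed

lemma le_sum_mult_word_length:
  fixes L :: "'n::finite sdp \<Rightarrow> real"
  assumes "finite_sym_gen_set A S"
    and "\<And>g h. L (sd_mult A g h) \<le> L g + L h" and "L sd_one = 0" and "\<And>g. L g \<ge> 0"
  shows "L g \<le> (\<Sum>s\<in>S. L s) * word_length A S g"
proof -
  obtain ws where "set ws \<subseteq> S" "length ws = word_length A S g" "sd_prod A ws = g"
    using word_length_attained[OF assms(1)] .
  with sd_prod_le_sum_mult_length[OF assms(2-4)] assms(1) show ?thesis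
    unfolding finite_sym_gen_set_def by metis
qed

lemma stable_word_length_pos_if_linear_growth:
  fixes L :: "'n::finite sdp \<Rightarrow> real"
  assumes "in_GL_int A" and gen: "finite_sym_gen_set A S"
    and sub: "\<And>g h. L (sd_mult A g h) \<le> L g + L h" and "L sd_one = 0" and "\<And>g. L g \<ge> 0"
    and "e > 0" and growth: "\<And>k. e * k \<le> L (sd_pow A g k)"
  shows "stable_word_length A S g > 0"
proof -
  define W where "W k = real (word_length A S (sd_pow A g k))" for k
  define C where "C = (\<Sum>s\<in>S. L s)"
  have "W (k + l) \<le> W k + W l" for k l
    unfolding W_def sd_pow_add[OF assms(1)]
    using word_length_mult_le[OF assms(1) gen] by (metis of_nat_add of_nat_le_iff)
  then have lim: "(\<lambda>k. W k / k) \<longlonglongrightarrow> (INF k\<in>{1..}. W k / k)"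
    by (rule subadditive_quotient_tendsto_Inf) (simp add: W_def)
  have bound: "e * k \<le> C * W k" for k
    using order_trans[OF growth le_sum_mult_word_length[OF gen sub assms(4,5)]]
    unfolding C_def W_def .
  have "C > 0"
  proof (rule ccontr)
    assume "\<not> C > 0"
    then have "C * W 1 \<le> 0"
      by (simp add: W_def mult_nonpos_nonneg)
    with bound[of 1] \<open>e > 0\<close> show False
      by simp
  qed
  have "e / C \<le> W k / k" if "k \<ge> 1" for k
    using bound[of k] that \<open>C > 0\<close> by (simp add: divide_le_eq le_divide_eq mult.commute)
  then have "e / C \<le> (INF k\<in>{1..}. W k / k)"
    by (intro cINF_greatest) auto
  \<comment> \<open>\<open>lim\<close> only denotes the limit of a convergent sequence, hence Fekete's lemma\<close>
  moreover have "stable_word_length A S g = (INF k\<in>{1..}. W k / k)"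
    using lim unfolding stable_word_length_def W_def by (rule limI)
  moreover have "e / C > 0"
    using \<open>e > 0\<close> \<open>C > 0\<close> by simp
  ultimately show ?thesis
    by linarith
qed

definition int_pairing :: "complex^'n \<Rightarrow> int^'n \<Rightarrow> complex" where
  "int_pairing w u = (\<Sum>i\<in>UNIV. w $ i * of_int (u $ i))"

lemma int_pairing_add: "int_pairing w (x + y) = int_pairing w x + int_pairing w y"
  by (simp add: int_pairing_def distrib_left sum.distrib)

lemma int_pairing_uminus: "int_pairing w (- x) = - int_pairing w x"
  by (simp add: int_pairing_def sum_negf)

lemma int_pairing_scalar: "int_pairing w (m *s x) = of_int m * int_pairing w x"
  by (simp add: int_pairing_def sum_distrib_left ac_simps)

lemma int_pairing_scalar_left: "int_pairing (c *s w) x = c * int_pairing w x"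
  by (simp add: int_pairing_def sum_distrib_left ac_simps)

lemma int_pairing_zero [simp]: "int_pairing w 0 = 0"
  by (simp add: int_pairing_def)

lemma int_pairing_axis: "int_pairing w (axis j 1) = w $ j"
  by (simp add: int_pairing_def axis_def if_distrib cong: if_cong)

lemma int_pairing_matrix_vector:
  "int_pairing w (A *v u) = int_pairing (w v* (\<chi> i j. of_int (A $ i $ j))) u"
proof -
  have "int_pairing w (A *v u) = (\<Sum>i\<in>UNIV. \<Sum>j\<in>UNIV. w $ i * of_int (A $ i $ j) * of_int (u $ j))"
    by (simp add: int_pairing_def matrix_vector_mult_def sum_distrib_left mult.assoc)
  also have "\<dots> = (\<Sum>j\<in>UNIV. \<Sum>i\<in>UNIV. w $ i * of_int (A $ i $ j) * of_int (u $ j))"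
    by (rule sum.swap)
  finally show ?thesis
    by (simp add: int_pairing_def vector_matrix_mult_def sum_distrib_right)
qed

lemma int_pairing_eigen_kernel_trivial:
  assumes irr: "irreducible_int_mat A" and "w \<noteq> 0"
    and eigen: "\<And>u. int_pairing w (A *v u) = c * int_pairing w u"
    and "int_pairing w u = 0"
  shows "u = 0"
proof (rule ccontr)
  assume "u \<noteq> 0"
  let ?I = "{x. int_pairing w x = 0}"
  have "?I \<noteq> UNIV"
  proof
    assume "?I = UNIV"
    then have "w $ j = 0" for j
      using int_pairing_axis[of w j] by (metis UNIV_I mem_Collect_eq)
    with \<open>w \<noteq> 0\<close> show False
      by (simp add: vec_eq_iff)
  qed
  moreover have "?I \<noteq> {0}"
    using \<open>u \<noteq> 0\<close> assms(4) by auto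
  moreover have "\<forall>v (m::int). m \<noteq> 0 \<and> m *s v \<in> ?I \<longrightarrow> v \<in> ?I"
    by (auto simp: int_pairing_scalar)
  moreover have "0 \<in> ?I" "\<forall>x\<in>?I. \<forall>y\<in>?I. x + y \<in> ?I" "\<forall>x\<in>?I. - x \<in> ?I"
    "\<forall>x\<in>?I. A *v x \<in> ?I"
    by (simp_all add: int_pairing_add int_pairing_uminus eigen)
  ultimately show False
    using irr[unfolded irreducible_int_mat_def not_ex, THEN spec[of _ ?I]] by blast
qed

lemma invariant_int_pairing_norm_exists:
  fixes A :: "int^'n^'n"
  assumes "irreducible_int_mat A" and "has_unit_eigenvalue A"
  obtains w where "\<And>u. cmod (int_pairing w (A *v u)) = cmod (int_pairing w u)"
    and "\<And>u. u \<noteq> 0 \<Longrightarrow> int_pairing w u \<noteq> 0"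
proof -
  obtain c v where "cmod c = 1" "v \<noteq> 0"
    and "(\<chi> i j. (of_int (A $ i $ j) :: complex)) *v v = c *s v"
    using assms(2) unfolding has_unit_eigenvalue_def by blast
  then obtain w where "w \<noteq> 0" and "w v* (\<chi> i j. of_int (A $ i $ j)) = c *s w"
    using left_eigenvector_exists by blast
  then have eigen: "int_pairing w (A *v u) = c * int_pairing w u" for u
    by (simp add: int_pairing_matrix_vector int_pairing_scalar_left)
  show ?thesis
  proof
    show "cmod (int_pairing w (A *v u)) = cmod (int_pairing w u)" for u
      by (simp add: eigen norm_mult \<open>cmod c = 1\<close>)
    show "int_pairing w u \<noteq> 0" if "u \<noteq> 0" for u
      using int_pairing_eigen_kernel_trivial[OF assms(1) \<open>w \<noteq> 0\<close> eigen] that by blast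
  qed
qed

definition sd_size :: "complex^'n \<Rightarrow> 'n sdp \<Rightarrow> real" where
  "sd_size w g = cmod (int_pairing w (fst g)) + \<bar>of_int (snd g)\<bar>"

lemma sd_size_mult_le:
  assumes "in_GL_int A" and "\<And>u. cmod (int_pairing w (A *v u)) = cmod (int_pairing w u)"
  shows "sd_size w (sd_mult A g h) \<le> sd_size w g + sd_size w h"
proof -
  have "cmod (int_pairing w (fst (sd_mult A g h)))
      \<le> cmod (int_pairing w (fst g)) + cmod (int_pairing w (int_mpow A (snd g) *v fst h))"
    by (simp add: sd_mult_def int_pairing_add norm_triangle_ineq)
  also have "cmod (int_pairing w (int_mpow A (snd g) *v fst h)) = cmod (int_pairing w (fst h))"
    using int_mpow_invariant[where f = "\<lambda>u. cmod (int_pairing w u)", OF assms] .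
  finally show ?thesis
    unfolding sd_size_def by (simp add: sd_mult_def)
qed

lemma sd_size_pow_linear_growth:
  assumes "\<And>u. u \<noteq> 0 \<Longrightarrow> int_pairing w u \<noteq> 0" and "g \<noteq> sd_one"
  obtains e where "e > 0" and "\<And>k. e * k \<le> sd_size w (sd_pow A g k)"
proof (cases "snd g = 0")
  case True
  then have "fst g \<noteq> 0"
    using assms(2) by (auto simp: sd_one_def prod_eq_iff)
  then have "cmod (int_pairing w (fst g)) > 0"
    using assms(1) by simp
  moreover have "cmod (int_pairing w (fst g)) * k \<le> sd_size w (sd_pow A g k)" for k
    using True by (simp add: sd_size_def fst_sd_pow_of_snd_0 int_pairing_scalar norm_mult)
  ultimately show ?thesis
    using that by blast
next
  case False
  have "1 * real k \<le> sd_size w (sd_pow A g k)" for k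
  proof -
    have "1 \<le> \<bar>real_of_int (snd g)\<bar>"
      using False by (metis of_int_1_le_iff of_int_abs zero_less_abs_iff int_one_le_iff_zero_less)
    then have "real k \<le> real k * \<bar>of_int (snd g)\<bar>"
      by (simp add: mult_le_cancel_left1)
    also have "\<dots> = \<bar>of_int (snd (sd_pow A g k))\<bar>"
      by (simp add: snd_sd_pow abs_mult)
    finally show ?thesis
      unfolding sd_size_def using norm_ge_zero[of "int_pairing w (fst (sd_pow A g k))"] by linarith
  qed
  then show ?thesis
    using that[of 1] by simp
qed

theorem lemma12:
  fixes A :: "int^'n^'n" and S :: "('n sdp) set"
  assumes "in_GL_int A"
    and "irreducible_int_mat A"
    and "has_unit_eigenvalue A"
    and "finite_sym_gen_set A S"
  shows "\<forall>g. infinite_order A g \<longrightarrow> stable_word_length A S g > 0"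
proof (intro allI impI)
  fix g
  assume "infinite_order A g"
  then have "g \<noteq> sd_one"
    unfolding infinite_order_def by (metis sd_pow_1 zero_less_one)
  obtain w where invariant: "\<And>u. cmod (int_pairing w (A *v u)) = cmod (int_pairing w u)"
    and definite: "\<And>u. u \<noteq> 0 \<Longrightarrow> int_pairing w u \<noteq> 0"
    using invariant_int_pairing_norm_exists[OF assms(2,3)] by blast
  obtain e where "e > 0" and "\<And>k. e * k \<le> sd_size w (sd_pow A g k)"
    using sd_size_pow_linear_growth[OF definite \<open>g \<noteq> sd_one\<close>] by blast
  then show "stable_word_length A S g > 0"
    using stable_word_length_pos_if_linear_growth[OF assms(1,4) sd_size_mult_le[OF assms(1) invariant]]
    by (simp add: sd_size_def sd_one_def)
qed

end
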